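(* Let $\nu,a,b\in\mathbb{R}$ with $0<b+\nu<(a+\nu)/4$. Let $u^*$ be the unique solution in $b<u<a$ of $\lambda_2(a,u,b)=\lambda_3(a,u,b)$, and put $\alpha=\lambda_2(a,u^*,b)$. Then the equation $x/t=\lambda_2(a,u_2,b)$ can be inverted to give $u_2\in[u^*,a]$ as an increasing function of $x/t$ on the interval $\alpha\le x/t\le 2a+b+2\nu$.
   Context: For $-\nu<u_3<u_2<u_1$ define $$I(u_1,u_2,u_3)=\int_{u_3}^{u_2}\frac{\eta+\nu}{\sqrt{(\eta+\nu)(u_1-\eta)(u_2-\eta)(\eta-u_3)}}\,d\eta,$$ and for $i=1,2,3$ $$\lambda_i=u_1+u_2+u_3+2\nu-\frac{I}{\partial I/\partial u_i}.$$ These functions extend continuously to $u_1=u_2>u_3$, where $\lambda_2=2u_1+u_3+2\nu$. *)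

theory Defs
  imports "HOL-Analysis.Analysis"
begin

text \<open>The integral I(u1,u2,u3) (depending on the parameter nu), as a
  (Henstock-Kurzweil, hence improper-Riemann-compatible) integral over [u3,u2].\<close>
definition Ifun :: "real \<Rightarrow> real \<Rightarrow> real \<Rightarrow> real \<Rightarrow> real" where
  "Ifun \<nu> u1 u2 u3 =
     integral {u3..u2}
       (\<lambda>\<eta>. (\<eta> + \<nu>) / sqrt ((\<eta> + \<nu>) * (u1 - \<eta>) * (u2 - \<eta>) * (\<eta> - u3)))"

text \<open>lambda_2, including its continuous extension to u1 = u2.\<close>
definition lam2 :: "real \<Rightarrow> real \<Rightarrow> real \<Rightarrow> real \<Rightarrow> real" where
  "lam2 \<nu> u1 u2 u3 =
     (if u1 = u2 then 2 * u1 + u3 + 2 * \<nu>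
      else u1 + u2 + u3 + 2 * \<nu> - Ifun \<nu> u1 u2 u3 / deriv (\<lambda>s. Ifun \<nu> u1 s u3) u2)"

definition lam3 :: "real \<Rightarrow> real \<Rightarrow> real \<Rightarrow> real \<Rightarrow> real" where
  "lam3 \<nu> u1 u2 u3 =
     u1 + u2 + u3 + 2 * \<nu> - Ifun \<nu> u1 u2 u3 / deriv (\<lambda>s. Ifun \<nu> u1 u2 s) u3"

end

theory Submission
  imports Defs
begin

text \<open>
  The substitution \<open>\<eta> = w + (u - w) sin\<^sup>2 t\<close> turns \<open>I(a, u, w)\<close> into the integral \<open>J\<close> of
  \<open>2 \<surd>(\<eta> + \<nu>) / \<surd>(a - \<eta>)\<close> over \<open>t \<in> [0, \<pi>/2]\<close>, a smooth function of \<open>u\<close> and \<open>w\<close> whose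
  partial derivatives are integrals of the same kind. Hence \<open>\<lambda>\<^sub>2 = a + u + b + 2\<nu> - J / J\<^sub>u\<close>,
  \<open>\<lambda>\<^sub>3 = a + u + b + 2\<nu> - J / J\<^sub>w\<close> and \<open>\<partial>\<^sub>u \<lambda>\<^sub>2 = J J\<^sub>u\<^sub>u / J\<^sub>u\<^sup>2\<close>.
  Integration by parts gives \<open>J\<^sub>u - J\<^sub>w = 2 (u - w) J\<^sub>u\<^sub>w\<close>, so \<open>\<lambda>\<^sub>3 < \<lambda>\<^sub>2\<close> exactly when
  \<open>J\<^sub>u\<^sub>w > 0\<close>. The second derivative of the kernel changes sign once, at
  \<open>\<eta> + \<nu> = (a + \<nu>) / 4 > b + \<nu>\<close>, and this forces \<open>J\<^sub>u\<^sub>u > 0\<close> whenever \<open>J\<^sub>u\<^sub>w > 0\<close>.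
  As \<open>u \<rightarrow> a\<close>, \<open>J / J\<^sub>u \<rightarrow> 0\<close> while \<open>J / J\<^sub>w\<close> stays bounded below, so \<open>\<lambda>\<^sub>3 < \<lambda>\<^sub>2\<close> near \<open>a\<close> and
  \<open>\<lambda>\<^sub>2 \<rightarrow> 2a + b + 2\<nu>\<close>. Since \<open>u\<^sup>*\<close> is the only zero of \<open>\<lambda>\<^sub>2 - \<lambda>\<^sub>3\<close> in \<open>(b, a)\<close>, we get
  \<open>\<lambda>\<^sub>3 < \<lambda>\<^sub>2\<close>, hence \<open>\<partial>\<^sub>u \<lambda>\<^sub>2 > 0\<close>, on all of \<open>(u\<^sup>*, a)\<close>.
\<close>


lemma integral_ge_on_subinterval:
  fixes \<phi> :: "real \<Rightarrow> real"
  assumes "continuous_on {a..b} \<phi>" and "\<And>t. t \<in> {a..b} \<Longrightarrow> 0 \<le> \<phi> t"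
    and "a \<le> c" "c \<le> d" "d \<le> b" and "\<And>t. t \<in> {c..d} \<Longrightarrow> m \<le> \<phi> t"
  shows "m * (d - c) \<le> integral {a..b} \<phi>"
proof -
  have sub: "{c..d} \<subseteq> {a..b}" using assms by auto
  have int: "\<phi> integrable_on {a..b}" "\<phi> integrable_on {c..d}"
    using assms(1) integrable_continuous_interval[OF continuous_on_subset[OF assms(1) sub]]
    by (auto intro: integrable_continuous_interval)
  have "m * (d - c) = integral {c..d} (\<lambda>_. m)" using assms by simp
  also have "\<dots> \<le> integral {c..d} \<phi>" using int assms by (intro integral_le) auto
  also have "\<dots> \<le> integral {a..b} \<phi>" using int sub assms by (intro integral_subset_le) auto
  finally show ?thesis .
qed

lemma integral_pos_continuous:
  fixes \<phi> :: "real \<Rightarrow> real"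
  assumes cont: "continuous_on {a..b} \<phi>" and nonneg: "\<And>t. t \<in> {a..b} \<Longrightarrow> 0 \<le> \<phi> t"
    and c: "c \<in> {a<..<b}" "0 < \<phi> c"
  shows "0 < integral {a..b} \<phi>"
proof -
  obtain \<delta> where \<delta>: "0 < \<delta>"
    and close: "\<And>t. t \<in> {a..b} \<Longrightarrow> dist t c < \<delta> \<Longrightarrow> dist (\<phi> t) (\<phi> c) < \<phi> c / 2"
    using cont c unfolding continuous_on_iff by (metis greaterThanLessThan_iff atLeastAtMost_iff
        half_gt_zero less_imp_le)
  define d where "d = min (\<delta> / 2) (min (c - a) (b - c))"
  have d: "0 < d" "a \<le> c - d" "c + d \<le> b" using c \<delta> unfolding d_def by auto
  have "\<phi> c / 2 \<le> \<phi> t" if "t \<in> {c - d..c + d}" for t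
  proof -
    have "dist t c < \<delta>" using that \<delta> unfolding d_def dist_real_def by auto
    then show ?thesis using close[of t] that d unfolding dist_real_def by (auto simp: abs_if split: if_splits)
  qed
  then have "\<phi> c / 2 * ((c + d) - (c - d)) \<le> integral {a..b} \<phi>"
    using d by (intro integral_ge_on_subinterval[OF cont nonneg]) auto
  moreover have "0 < \<phi> c / 2 * ((c + d) - (c - d))" using c d by simp
  ultimately show ?thesis by linarith
qed

lemma divide_le_divide_if_cross_le:
  fixes A c X Y :: real
  assumes "0 < A" "0 < X" "0 < Y" "c * Y \<le> X"
  shows "A * c / X \<le> A / Y"
  using assms by (simp add: field_simps mult_left_mono)

lemma has_field_derivative_integral_affine:
  fixes f f' g p q :: "real \<Rightarrow> real"
  assumes deriv: "\<And>e. e \<in> {l<..<r} \<Longrightarrow> (f has_real_derivative f' e) (at e)"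
    and cont': "continuous_on {l<..<r} f'"
    and path: "\<And>x t. x \<in> {l<..<r} \<Longrightarrow> t \<in> {c..d} \<Longrightarrow> p t + x * q t \<in> {l<..<r}"
    and cp: "continuous_on {c..d} p" and cq: "continuous_on {c..d} q"
    and cg: "continuous_on {c..d} g"
    and x0: "x0 \<in> {l<..<r}"
  shows "((\<lambda>x. integral {c..d} (\<lambda>t. f (p t + x * q t) * g t)) has_field_derivative
      integral {c..d} (\<lambda>t. f' (p t + x0 * q t) * (q t * g t))) (at x0)"
proof -
  let ?S = "{l<..<r}"
  have cf: "continuous_on ?S f"
    by (rule DERIV_continuous_on, rule has_field_derivative_at_within, rule deriv) auto
  have "((\<lambda>x. integral (cbox c d) (\<lambda>t. f (p t + x * q t) * g t)) has_field_derivative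
      integral (cbox c d) (\<lambda>t. f' (p t + x0 * q t) * (q t * g t))) (at x0 within ?S)"
  proof (rule leibniz_rule_field_derivative)
    fix x t assume x: "x \<in> ?S" and t: "t \<in> cbox c d"
    have "((\<lambda>x. p t + x * q t) has_real_derivative q t) (at x)"
      by (auto intro!: derivative_eq_intros)
    then have "((\<lambda>x. f (p t + x * q t)) has_real_derivative f' (p t + x * q t) * q t) (at x)"
      using path x t by (intro DERIV_chain2[OF deriv]) auto
    then show "((\<lambda>x. f (p t + x * q t) * g t) has_real_derivative
        f' (p t + x * q t) * (q t * g t)) (at x within ?S)"
      unfolding mult.assoc[symmetric] by (rule has_field_derivative_at_within[OF DERIV_cmult_right])
  next
    fix x assume x: "x \<in> ?S"
    have "continuous_on {c..d} (\<lambda>t. p t + x * q t)"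
      by (intro continuous_intros cp cq)
    moreover have "(\<lambda>t. p t + x * q t) ` {c..d} \<subseteq> ?S" using path x by auto
    ultimately have "continuous_on {c..d} (\<lambda>t. f (p t + x * q t) * g t)"
      by (rule continuous_on_mult[OF continuous_on_compose2[OF cf] cg])
    then show "(\<lambda>t. f (p t + x * q t) * g t) integrable_on cbox c d"
      by (simp add: integrable_continuous_interval)
  next
    let ?P = "?S \<times> {c..d}"
    have cpq: "continuous_on ?P (\<lambda>z. p (snd z) + fst z * q (snd z))"
      by (intro continuous_intros continuous_on_compose2[OF cp] continuous_on_compose2[OF cq]) auto
    have "(\<lambda>z. p (snd z) + fst z * q (snd z)) ` ?P \<subseteq> ?S" using path by auto
    then have "continuous_on ?P (\<lambda>z. f' (p (snd z) + fst z * q (snd z)))"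
      by (rule continuous_on_compose2[OF cont' cpq])
    moreover have "continuous_on ?P (\<lambda>z. q (snd z) * g (snd z))"
      by (intro continuous_intros continuous_on_compose2[OF cq] continuous_on_compose2[OF cg]) auto
    ultimately show "continuous_on (?S \<times> cbox c d) (\<lambda>(x, t). f' (p t + x * q t) * (q t * g t))"
      by (simp add: split_beta continuous_on_mult)
  qed (use x0 in auto)
  then show ?thesis using x0 by (simp add: at_within_open[of x0 ?S])
qed

text \<open>The integrand of \<open>Ifun\<close> is unbounded at both end points, so the
  Henstock--Kurzweil substitution rules (which need a continuous integrand) do not apply;
  for nonnegative integrands one can go through the Lebesgue integral instead.\<close>

lemma has_integral_substitution_nonneg:
  fixes f g g' :: "real \<Rightarrow> real"
  assumes Mf: "f \<in> borel_measurable borel" and f_nonneg: "\<And>x. x \<in> {g a..g b} \<Longrightarrow> 0 \<le> f x"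
    and derivg: "\<And>x. x \<in> {a..b} \<Longrightarrow> (g has_real_derivative g' x) (at x)"
    and contg': "continuous_on {a..b} g'" and g'_nonneg: "\<And>x. x \<in> {a..b} \<Longrightarrow> 0 \<le> g' x"
    and "a \<le> b"
    and I: "((\<lambda>x. f (g x) * g' x) has_integral I) {a..b}"
  shows "(f has_integral I) {g a..g b}"
proof -
  have mono: "g x \<in> {g a..g b}" if "x \<in> {a..b}" for x
    using deriv_nonneg_imp_mono[OF derivg g'_nonneg] that by auto
  have nonneg: "0 \<le> f (g x) * g' x" if "x \<in> {a..b}" for x
    using f_nonneg[OF mono[OF that]] g'_nonneg[OF that] by simp
  have "(\<integral>\<^sup>+x. f x * indicator {g a..g b} x \<partial>lborel)
      = (\<integral>\<^sup>+x. f (g x) * g' x * indicator {a..b} x \<partial>lborel)"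
    using Mf by (intro nn_integral_substitution[OF _ derivg contg' g'_nonneg \<open>a \<le> b\<close>])
      (auto simp: set_borel_measurable_def)
  also have "\<dots> = (\<integral>\<^sup>+x. ennreal (f (g x) * g' x) * indicator {a..b} x \<partial>lborel)"
    by (intro nn_integral_cong) (simp split: split_indicator)
  also have "\<dots> = ennreal I"
    by (rule nn_integral_has_integral_lebesgue'[OF nonneg I])
  finally have "((\<lambda>x. f x * indicator {g a..g b} x) has_integral I) UNIV"
    using Mf f_nonneg has_integral_nonneg[OF I nonneg]
    by (intro nn_integral_has_integral) (auto simp: indicator_def)
  moreover have "(\<lambda>x. f x * indicator {g a..g b} x) = (\<lambda>x. if x \<in> {g a..g b} then f x else 0)"
    by (auto simp: indicator_def)
  ultimately show ?thesis by (simp only: has_integral_restrict_UNIV)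
qed

lemma pos_if_no_zeros_and_eventually_pos:
  fixes f :: "real \<Rightarrow> real"
  assumes cont: "continuous_on {x<..<y} f" and no_zero: "\<And>z. z \<in> {x<..<y} \<Longrightarrow> f z \<noteq> 0"
    and ev: "eventually (\<lambda>z. 0 < f z) (at_left y)" and z: "z \<in> {x<..<y}"
  shows "0 < f z"
proof (rule ccontr)
  assume "\<not> 0 < f z"
  then have neg: "f z < 0" using no_zero[OF z] by simp
  have "z < y" using z by simp
  have "eventually (\<lambda>z'. 0 < f z' \<and> z < z' \<and> z' < y) (at_left y)"
    using ev eventually_at_left_real[OF \<open>z < y\<close>] by eventually_elim auto
  then obtain z' where z': "0 < f z'" "z < z'" "z' < y"
    using eventually_happens'[OF trivial_limit_at_left_real] by blast
  have "continuous_on {z..z'} f" using z z' by (intro continuous_on_subset[OF cont]) auto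
  then obtain c where "z \<le> c" "c \<le> z'" "f c = 0"
    using IVT'[of f z 0 z'] neg z' by auto
  then show False using no_zero[of c] z z' by auto
qed

lemma strict_mono_on_if_deriv_pos:
  fixes f :: "real \<Rightarrow> real"
  assumes "continuous_on {x..y} f"
    and "\<And>t. t \<in> {x<..<y} \<Longrightarrow> \<exists>d. (f has_real_derivative d) (at t) \<and> 0 < d"
  shows "strict_mono_on {x..y} f"
proof (rule strict_mono_onI)
  fix s t assume st: "s \<in> {x..y}" "t \<in> {x..y}" "s < t"
  show "f s < f t"
  proof (rule DERIV_pos_imp_increasing_open[OF \<open>s < t\<close>])
    show "\<exists>d. (f has_real_derivative d) (at r) \<and> 0 < d" if "s < r" "r < t" for r
      using assms(2)[of r] that st by simp
    show "continuous_on {s..t} f"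
      using st by (intro continuous_on_subset[OF assms(1)]) auto
  qed
qed

lemma bij_betw_if_strict_mono_continuous:
  fixes f :: "real \<Rightarrow> real"
  assumes mono: "strict_mono_on {x..y} f" and cont: "continuous_on {x..y} f" and "x \<le> y"
  shows "bij_betw f {x..y} {f x..f y}"
  unfolding bij_betw_def
proof
  show "inj_on f {x..y}" using mono by (rule strict_mono_on_imp_inj_on)
  have "f ` {x..y} \<subseteq> {f x..f y}"
    using \<open>x \<le> y\<close> by (auto intro!: strict_mono_on_leD[OF mono])
  moreover have "{f x..f y} \<subseteq> f ` {x..y}"
  proof
    fix c assume "c \<in> {f x..f y}"
    then obtain t where "x \<le> t" "t \<le> y" "f t = c"
      using IVT'[of f x c y] cont \<open>x \<le> y\<close> by auto
    then show "c \<in> f ` {x..y}" by auto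
  qed
  ultimately show "f ` {x..y} = {f x..f y}" by blast
qed

section \<open>The kernel\<close>

text \<open>\<open>kern \<nu> a\<close> is the integrand of \<open>Ifun\<close> after the substitution
  \<open>\<eta> = w + (u - w) sin\<^sup>2 t\<close> (see \<open>Ifun_eq_J\<close>).\<close>

definition kern :: "real \<Rightarrow> real \<Rightarrow> real \<Rightarrow> real" where
  "kern \<nu> a e = 2 * sqrt (e + \<nu>) / sqrt (a - e)"

definition kern' :: "real \<Rightarrow> real \<Rightarrow> real \<Rightarrow> real" where
  "kern' \<nu> a e = (a + \<nu>) / (sqrt (e + \<nu>) * ((a - e) * sqrt (a - e)))"

definition kern'' :: "real \<Rightarrow> real \<Rightarrow> real \<Rightarrow> real" where
  "kern'' \<nu> a e = (a + \<nu>) * (4 * (e + \<nu>) - (a + \<nu>)) /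
      (2 * ((e + \<nu>) * sqrt (e + \<nu>)) * ((a - e)\<^sup>2 * sqrt (a - e)))"

lemma has_real_derivative_kern:
  assumes "-\<nu> < e" "e < a"
  shows "(kern \<nu> a has_real_derivative kern' \<nu> a e) (at e)"
proof -
  obtain r s where r: "r = sqrt (e + \<nu>)" and s: "s = sqrt (a - e)" by simp
  have pos: "0 < r" "0 < s" and sq: "r * r = e + \<nu>" "s * s = a - e"
    using assms r s by auto
  have A: "a + \<nu> = r * r + s * s" using sq by linarith
  have "(kern \<nu> a has_real_derivative
      (inverse r * s + 2 * r * (inverse s / 2)) / (s * s)) (at e)"
    unfolding kern_def[abs_def] r s using assms
    by (auto intro!: derivative_eq_intros)
  moreover have "(inverse r * s + 2 * r * (inverse s / 2)) / (s * s) = kern' \<nu> a e"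
    unfolding kern'_def r[symmetric] s[symmetric] sq[symmetric] A using pos
    by (simp add: field_simps)
  ultimately show ?thesis by simp
qed

lemma has_real_derivative_kern':
  assumes "-\<nu> < e" "e < a"
  shows "(kern' \<nu> a has_real_derivative kern'' \<nu> a e) (at e)"
proof -
  obtain r s where r: "r = sqrt (e + \<nu>)" and s: "s = sqrt (a - e)" by simp
  have pos: "0 < r" "0 < s" and sq: "e + \<nu> = r\<^sup>2" "a - e = s\<^sup>2"
    using assms r s by auto
  have "(kern' \<nu> a has_real_derivative
      - ((a + \<nu>) * ((inverse r / 2) * ((a - e) * s) + r * (- s + (a - e) * (- (inverse s / 2)))))
        / (r * ((a - e) * s))\<^sup>2) (at e)"
    unfolding kern'_def[abs_def] r s using assms
    by (auto intro!: derivative_eq_intros simp: power2_eq_square)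
  moreover have "- ((a + \<nu>) * ((inverse r / 2) * ((a - e) * s) + r * (- s + (a - e) * (- (inverse s / 2)))))
        / (r * ((a - e) * s))\<^sup>2 = kern'' \<nu> a e"
  proof -
    have A: "a + \<nu> = r\<^sup>2 + s\<^sup>2" using sq by linarith
    show ?thesis unfolding kern''_def r[symmetric] s[symmetric] sq A using pos
      by (simp add: field_simps) algebra
  qed
  ultimately show ?thesis by simp
qed

lemma continuous_on_kern:
  "continuous_on {-\<nu><..<a} (kern \<nu> a)"
  "continuous_on {-\<nu><..<a} (kern' \<nu> a)"
  "continuous_on {-\<nu><..<a} (kern'' \<nu> a)"
  unfolding kern_def[abs_def] kern'_def[abs_def] kern''_def[abs_def]
  by (intro continuous_intros; auto)+

lemma kern_pos: "-\<nu> < e \<Longrightarrow> e < a \<Longrightarrow> 0 < kern \<nu> a e"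
  and kern'_pos: "-\<nu> < e \<Longrightarrow> e < a \<Longrightarrow> 0 < kern' \<nu> a e"
  unfolding kern_def kern'_def by auto

lemma kern'_eq_kern:
  assumes "-\<nu> < e" "e < a"
  shows "kern' \<nu> a e = (a + \<nu>) / (2 * (e + \<nu>) * (a - e)) * kern \<nu> a e"
proof -
  obtain r s where r: "r = sqrt (e + \<nu>)" and s: "s = sqrt (a - e)" by simp
  have pos: "0 < r" "0 < s" and sq: "e + \<nu> = r * r" "a - e = s * s"
    using assms r s by auto
  show ?thesis unfolding kern_def kern'_def r[symmetric] s[symmetric] sq using pos
    by (simp add: field_simps)
qed

lemma kern''_mult_nonneg:
  assumes "-\<nu> < e" "e < a"
  shows "0 \<le> kern'' \<nu> a e * (4 * (e + \<nu>) - (a + \<nu>))"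
proof -
  have "0 < 2 * ((e + \<nu>) * sqrt (e + \<nu>)) * ((a - e)\<^sup>2 * sqrt (a - e))"
    using assms by auto
  then show ?thesis unfolding kern''_def using assms
    by (simp add: power2_eq_square[symmetric] mult.assoc)
qed

lemma kern''_nonpos:
  assumes "-\<nu> < e" "e < a" "4 * (e + \<nu>) \<le> a + \<nu>"
  shows "kern'' \<nu> a e \<le> 0"
  unfolding kern''_def using assms
  by (intro divide_nonpos_pos mult_nonneg_nonpos) auto

section \<open>Integrals along the substitution\<close>

definition eta :: "real \<Rightarrow> real \<Rightarrow> real \<Rightarrow> real" where
  "eta w u t = w + (u - w) * (sin t)\<^sup>2"

lemma eta_cos_sin: "eta w u t = w * (cos t)\<^sup>2 + u * (sin t)\<^sup>2"
  unfolding eta_def cos_squared_eq by algebra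

lemma eta_sin_cos: "eta w u t = u * (sin t)\<^sup>2 + w * (cos t)\<^sup>2"
  by (simp add: eta_cos_sin)

lemma eta_diff_left: "eta w u t - w = (u - w) * (sin t)\<^sup>2"
  and eta_diff_right: "u - eta w u t = (u - w) * (cos t)\<^sup>2"
  unfolding eta_def cos_squared_eq by algebra+

lemma eta_between: "min w u \<le> eta w u t \<and> eta w u t \<le> max w u"
proof (cases "w \<le> u")
  case True
  then have "0 \<le> (u - w) * (sin t)\<^sup>2" "0 \<le> (u - w) * (cos t)\<^sup>2" by simp_all
  then have "w \<le> eta w u t" "eta w u t \<le> u"
    using eta_diff_left[of w u t] eta_diff_right[of u w t] by linarith+
  then show ?thesis using True by simp
next
  case False
  then have "(u - w) * (sin t)\<^sup>2 \<le> 0" "(u - w) * (cos t)\<^sup>2 \<le> 0"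
    by (simp_all add: mult_nonpos_nonneg)
  then have "u \<le> eta w u t" "eta w u t \<le> w"
    using eta_diff_left[of w u t] eta_diff_right[of u w t] by linarith+
  then show ?thesis using False by simp
qed

lemma eta_in_interval:
  "w \<in> {l<..<r} \<Longrightarrow> u \<in> {l<..<r} \<Longrightarrow> eta w u t \<in> {l<..<r}"
  using eta_between[of w u t] by auto

lemma eta_bounds:
  assumes "-\<nu> < w" "w < u" "u < a"
  shows "-\<nu> < eta w u t" "eta w u t < a" "w \<le> eta w u t" "eta w u t \<le> u"
  using eta_in_interval[of w "-\<nu>" a u t] eta_between[of w u t] assms by auto

definition eta_integral :: "(real \<Rightarrow> real) \<Rightarrow> (real \<Rightarrow> real) \<Rightarrow> real \<Rightarrow> real \<Rightarrow> real" where
  "eta_integral f g w u = integral {0..pi/2} (\<lambda>t. f (eta w u t) * g t)"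

lemma continuous_on_eta_integrand:
  fixes f g :: "real \<Rightarrow> real"
  assumes "continuous_on {l<..<r} f" "continuous_on {0..pi/2} g"
    and "w \<in> {l<..<r}" "u \<in> {l<..<r}"
  shows "continuous_on {0..pi/2} (\<lambda>t. f (eta w u t) * g t)"
proof -
  have ce: "continuous_on {0..pi/2} (eta w u)"
    unfolding eta_def[abs_def] by (intro continuous_intros)
  have im: "eta w u ` {0..pi/2} \<subseteq> {l<..<r}"
    using eta_in_interval assms by blast
  show ?thesis
    by (rule continuous_on_mult[OF continuous_on_compose2[OF assms(1) ce im] assms(2)])
qed

lemma has_integral_eta_integral:
  fixes f g :: "real \<Rightarrow> real"
  assumes "continuous_on {l<..<r} f" "continuous_on {0..pi/2} g"
    and "w \<in> {l<..<r}" "u \<in> {l<..<r}"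
  shows "((\<lambda>t. f (eta w u t) * g t) has_integral eta_integral f g w u) {0..pi/2}"
  unfolding eta_integral_def
  by (intro integrable_integral integrable_continuous_interval continuous_on_eta_integrand[OF assms])

lemma has_field_derivative_eta_integral_right:
  fixes f f' g :: "real \<Rightarrow> real"
  assumes "\<And>e. e \<in> {l<..<r} \<Longrightarrow> (f has_real_derivative f' e) (at e)"
    and "continuous_on {l<..<r} f'" and "continuous_on {0..pi/2} g"
    and w: "w \<in> {l<..<r}" and u: "u \<in> {l<..<r}"
  shows "((\<lambda>u. eta_integral f g w u) has_field_derivative
      eta_integral f' (\<lambda>t. (sin t)\<^sup>2 * g t) w u) (at u)"
proof -
  have "((\<lambda>u. integral {0..pi/2} (\<lambda>t. f (w * (cos t)\<^sup>2 + u * (sin t)\<^sup>2) * g t))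
      has_field_derivative integral {0..pi/2}
        (\<lambda>t. f' (w * (cos t)\<^sup>2 + u * (sin t)\<^sup>2) * ((sin t)\<^sup>2 * g t))) (at u)"
    using eta_in_interval[OF w] by (intro has_field_derivative_integral_affine[OF assms(1,2)] assms(3) u)
      (auto simp: eta_cos_sin intro!: continuous_intros)
  then show ?thesis unfolding eta_integral_def eta_cos_sin .
qed

lemma has_field_derivative_eta_integral_left:
  fixes f f' g :: "real \<Rightarrow> real"
  assumes "\<And>e. e \<in> {l<..<r} \<Longrightarrow> (f has_real_derivative f' e) (at e)"
    and "continuous_on {l<..<r} f'" and "continuous_on {0..pi/2} g"
    and w: "w \<in> {l<..<r}" and u: "u \<in> {l<..<r}"
  shows "((\<lambda>w. eta_integral f g w u) has_field_derivative
      eta_integral f' (\<lambda>t. (cos t)\<^sup>2 * g t) w u) (at w)"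
proof -
  have "((\<lambda>w. integral {0..pi/2} (\<lambda>t. f (u * (sin t)\<^sup>2 + w * (cos t)\<^sup>2) * g t))
      has_field_derivative integral {0..pi/2}
        (\<lambda>t. f' (u * (sin t)\<^sup>2 + w * (cos t)\<^sup>2) * ((cos t)\<^sup>2 * g t))) (at w)"
    using eta_in_interval[OF _ u] by (intro has_field_derivative_integral_affine[OF assms(1,2)] assms(3) w)
      (auto simp: eta_sin_cos intro!: continuous_intros)
  then show ?thesis unfolding eta_integral_def eta_sin_cos .
qed

lemma eta_integral_pos:
  fixes f g :: "real \<Rightarrow> real"
  assumes "continuous_on {l<..<r} f" and "\<And>e. e \<in> {l<..<r} \<Longrightarrow> 0 < f e"
    and "continuous_on {0..pi/2} g" and "\<And>t. t \<in> {0..pi/2} \<Longrightarrow> 0 \<le> g t" and "0 < g (pi/4)"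
    and "w \<in> {l<..<r}" "u \<in> {l<..<r}"
  shows "0 < eta_integral f g w u"
  unfolding eta_integral_def
proof (rule integral_pos_continuous[where c="pi/4"])
  show "continuous_on {0..pi/2} (\<lambda>t. f (eta w u t) * g t)"
    using assms by (intro continuous_on_eta_integrand)
  have f_eta: "0 < f (eta w u t)" for t
    using assms eta_in_interval[of w l r u t] by blast
  show "0 \<le> f (eta w u t) * g t" if "t \<in> {0..pi/2}" for t
    using f_eta[of t] assms(4)[OF that] by simp
  show "0 < f (eta w u (pi/4)) * g (pi/4)"
    using f_eta assms(5) by simp
qed (use pi_gt_zero in auto)

section \<open>The integral \<open>I\<close> and its derivatives\<close>

text \<open>\<open>J \<nu> a w u = I(a, u, w)\<close> (\<open>Ifun_eq_J\<close>); the subscripts name partial derivatives in \<open>u\<close> and \<open>w\<close>.\<close>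

abbreviation J :: "real \<Rightarrow> real \<Rightarrow> real \<Rightarrow> real \<Rightarrow> real" where
  "J \<nu> a w u \<equiv> eta_integral (kern \<nu> a) (\<lambda>_. 1) w u"
abbreviation J_u :: "real \<Rightarrow> real \<Rightarrow> real \<Rightarrow> real \<Rightarrow> real" where
  "J_u \<nu> a w u \<equiv> eta_integral (kern' \<nu> a) (\<lambda>t. (sin t)\<^sup>2) w u"
abbreviation J_w :: "real \<Rightarrow> real \<Rightarrow> real \<Rightarrow> real \<Rightarrow> real" where
  "J_w \<nu> a w u \<equiv> eta_integral (kern' \<nu> a) (\<lambda>t. (cos t)\<^sup>2) w u"
abbreviation J_uu :: "real \<Rightarrow> real \<Rightarrow> real \<Rightarrow> real \<Rightarrow> real" where
  "J_uu \<nu> a w u \<equiv> eta_integral (kern'' \<nu> a) (\<lambda>t. (sin t)\<^sup>2 * (sin t)\<^sup>2) w u"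
abbreviation J_uw :: "real \<Rightarrow> real \<Rightarrow> real \<Rightarrow> real \<Rightarrow> real" where
  "J_uw \<nu> a w u \<equiv> eta_integral (kern'' \<nu> a) (\<lambda>t. (sin t)\<^sup>2 * (cos t)\<^sup>2) w u"

context
  fixes \<nu> a w u :: real
  assumes w: "w \<in> {-\<nu><..<a}" and u: "u \<in> {-\<nu><..<a}"
begin

lemma has_field_derivative_J_right: "((\<lambda>u. J \<nu> a w u) has_field_derivative J_u \<nu> a w u) (at u)"
  using has_field_derivative_eta_integral_right[OF has_real_derivative_kern continuous_on_kern(2) _ w u, of "\<lambda>_. 1"]
  by simp

lemma has_field_derivative_J_left: "((\<lambda>w. J \<nu> a w u) has_field_derivative J_w \<nu> a w u) (at w)"
  using has_field_derivative_eta_integral_left[OF has_real_derivative_kern continuous_on_kern(2) _ w u, of "\<lambda>_. 1"]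
  by simp

lemma has_field_derivative_J_u_right: "((\<lambda>u. J_u \<nu> a w u) has_field_derivative J_uu \<nu> a w u) (at u)"
  by (rule has_field_derivative_eta_integral_right[OF has_real_derivative_kern' continuous_on_kern(3) _ w u])
    (auto intro!: continuous_intros)

lemma has_field_derivative_J_w_right: "((\<lambda>u. J_w \<nu> a w u) has_field_derivative J_uw \<nu> a w u) (at u)"
  by (rule has_field_derivative_eta_integral_right[OF has_real_derivative_kern' continuous_on_kern(3) _ w u])
    (auto intro!: continuous_intros)

lemma J_pos: "0 < J \<nu> a w u"
  using kern_pos by (intro eta_integral_pos[OF continuous_on_kern(1) _ _ _ _ w u]) auto

lemma J_u_pos: "0 < J_u \<nu> a w u"
  using kern'_pos by (intro eta_integral_pos[OF continuous_on_kern(2) _ _ _ _ w u])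
    (auto simp: sin_45 cos_45 intro!: continuous_intros)

lemma J_w_pos: "0 < J_w \<nu> a w u"
  using kern'_pos by (intro eta_integral_pos[OF continuous_on_kern(2) _ _ _ _ w u])
    (auto simp: sin_45 cos_45 intro!: continuous_intros)

end

lemma Ifun_integrand_eta:
  assumes "-\<nu> < w" "w < u" "u < a" "0 < t" "t < pi/2"
  shows "(eta w u t + \<nu>) / sqrt ((eta w u t + \<nu>) * (a - eta w u t) * (u - eta w u t) * (eta w u t - w))
      * ((u - w) * (2 * sin t * cos t)) = kern \<nu> a (eta w u t)"
proof -
  define e where "e = eta w u t"
  have sc: "0 < sin t" "0 < cos t" using assms by (auto intro: sin_gt_zero cos_gt_zero)
  have e: "-\<nu> < e" "e < a" using eta_in_interval[of w "-\<nu>" a u t] assms unfolding e_def by auto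
  obtain Y where Y_def: "Y = (u - w) * sin t * cos t" by simp
  have Y: "0 < Y" using sc assms Y_def by simp
  have "(e + \<nu>) * (a - e) * (u - e) * (e - w) = (e + \<nu>) * (a - e) * Y\<^sup>2"
    unfolding e_def Y_def eta_diff_left eta_diff_right by (simp add: power2_eq_square algebra_simps)
  then have sq: "sqrt ((e + \<nu>) * (a - e) * (u - e) * (e - w))
      = sqrt (e + \<nu>) * sqrt (a - e) * Y"
    using Y by (simp only: real_sqrt_mult real_sqrt_abs abs_of_pos)
  obtain p q where p: "p = sqrt (e + \<nu>)" and q: "q = sqrt (a - e)" by simp
  have "0 < p" "0 < q" "e + \<nu> = p * p" using e p q by auto
  moreover have "(u - w) * (2 * sin t * cos t) = 2 * Y" unfolding Y_def by simp
  ultimately show ?thesis unfolding e_def[symmetric] sq kern_def p[symmetric] q[symmetric] using Y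
    by (simp add: field_simps)
qed

lemma Ifun_eq_J:
  assumes "-\<nu> < w" "w < u" "u < a"
  shows "Ifun \<nu> a u w = J \<nu> a w u"
proof -
  define h where "h e = (e + \<nu>) / sqrt ((e + \<nu>) * (a - e) * (u - e) * (e - w))" for e
  define eta' where "eta' t = (u - w) * (2 * sin t * cos t)" for t
  have J: "((\<lambda>t. kern \<nu> a (eta w u t) * 1) has_integral J \<nu> a w u) {0..pi/2}"
    using assms by (intro has_integral_eta_integral[of "-\<nu>" a] continuous_on_kern) auto
  have "((\<lambda>t. h (eta w u t) * eta' t) has_integral J \<nu> a w u) {0..pi/2}"
  proof (rule has_integral_spike_finite[OF _ _ J])
    show "h (eta w u t) * eta' t = kern \<nu> a (eta w u t) * 1" if "t \<in> {0..pi/2} - {0, pi/2}" for t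
      using that Ifun_integrand_eta[OF assms, of t] unfolding h_def eta'_def by simp
  qed simp
  then have "(h has_integral J \<nu> a w u) {eta w u 0..eta w u (pi/2)}"
  proof (rule has_integral_substitution_nonneg[rotated 6])
    show "h \<in> borel_measurable borel" unfolding h_def[abs_def] by measurable
    show "(eta w u has_real_derivative eta' t) (at t)" for t
      unfolding eta_def[abs_def] eta'_def by (auto intro!: derivative_eq_intros)
    show "continuous_on {0..pi/2} eta'" unfolding eta'_def[abs_def] by (intro continuous_intros)
    show "0 \<le> eta' t" if "t \<in> {0..pi/2}" for t
      using that assms unfolding eta'_def by (auto intro!: mult_nonneg_nonneg sin_ge_zero cos_ge_zero)
    show "0 \<le> h e" if "e \<in> {eta w u 0..eta w u (pi/2)}" for e
      using that assms unfolding h_def by (auto simp: eta_def)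
  qed simp
  then show ?thesis unfolding Ifun_def h_def by (simp add: eta_def integral_unique)
qed

lemma lam2_eq_J:
  assumes "-\<nu> < b" "b < u" "u < a"
  shows "lam2 \<nu> a u b = a + u + b + 2 * \<nu> - J \<nu> a b u / J_u \<nu> a b u"
proof -
  have "((\<lambda>s. Ifun \<nu> a s b) has_field_derivative J_u \<nu> a b u) (at u)"
  proof (rule has_field_derivative_transform_within_open[OF has_field_derivative_J_right])
    show "J \<nu> a b s = Ifun \<nu> a s b" if "s \<in> {b<..<a}" for s
      using that assms Ifun_eq_J[of \<nu> b s a] by auto
  qed (use assms in auto)
  then show ?thesis
    unfolding lam2_def using assms Ifun_eq_J[of \<nu> b u a] by (auto dest: DERIV_imp_deriv)
qed

lemma lam3_eq_J:
  assumes "-\<nu> < b" "b < u" "u < a"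
  shows "lam3 \<nu> a u b = a + u + b + 2 * \<nu> - J \<nu> a b u / J_w \<nu> a b u"
proof -
  have "((\<lambda>s. Ifun \<nu> a u s) has_field_derivative J_w \<nu> a b u) (at b)"
  proof (rule has_field_derivative_transform_within_open[OF has_field_derivative_J_left])
    show "J \<nu> a s u = Ifun \<nu> a u s" if "s \<in> {-\<nu><..<u}" for s
      using that assms Ifun_eq_J[of \<nu> s u a] by auto
  qed (use assms in auto)
  then show ?thesis
    unfolding lam3_def using assms Ifun_eq_J[of \<nu> b u a] by (auto dest: DERIV_imp_deriv)
qed

lemma J_u_minus_J_w:
  assumes w: "w \<in> {-\<nu><..<a}" and u: "u \<in> {-\<nu><..<a}"
  shows "J_u \<nu> a w u - J_w \<nu> a w u = 2 * (u - w) * J_uw \<nu> a w u"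
proof -
  \<comment> \<open>Integration by parts against \<open>sin t cos t\<close>, which vanishes at both end points.\<close>
  define P where "P t = kern' \<nu> a (eta w u t) * (sin t * cos t)" for t
  define P' where "P' t = 2 * (u - w) * (kern'' \<nu> a (eta w u t) * ((sin t)\<^sup>2 * (cos t)\<^sup>2))
      + kern' \<nu> a (eta w u t) * (cos t)\<^sup>2 - kern' \<nu> a (eta w u t) * (sin t)\<^sup>2" for t
  have dP: "(P has_real_derivative P' t) (at t)" for t
  proof -
    have "((\<lambda>t. eta w u t) has_real_derivative (u - w) * (2 * sin t * cos t)) (at t)"
      unfolding eta_def by (auto intro!: derivative_eq_intros simp: power2_eq_square)
    then have d1: "((\<lambda>t. kern' \<nu> a (eta w u t)) has_real_derivative
        kern'' \<nu> a (eta w u t) * ((u - w) * (2 * sin t * cos t))) (at t)"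
      using eta_in_interval[OF w u, of t] by (intro DERIV_chain2[OF has_real_derivative_kern']) auto
    have "(P has_real_derivative kern'' \<nu> a (eta w u t) * ((u - w) * (2 * sin t * cos t))
        * (sin t * cos t) + kern' \<nu> a (eta w u t) * (cos t * cos t - sin t * sin t)) (at t)"
      unfolding P_def[abs_def] by (auto intro!: derivative_eq_intros d1)
    then show ?thesis unfolding P'_def by (simp add: power2_eq_square algebra_simps)
  qed
  have "(P' has_integral P (pi/2) - P 0) {0..pi/2}"
    using dP by (intro fundamental_theorem_of_calculus)
      (auto simp: has_real_derivative_iff_has_vector_derivative[symmetric] intro: has_field_derivative_at_within[OF dP])
  then have ftc: "(P' has_integral 0) {0..pi/2}" unfolding P_def by simp
  have P'_int: "(P' has_integral 2 * (u - w) * J_uw \<nu> a w u + J_w \<nu> a w u - J_u \<nu> a w u) {0..pi/2}"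
  proof -
    have "continuous_on {0..pi/2} (\<lambda>t. (sin t)\<^sup>2 * (cos t)\<^sup>2)"
      "continuous_on {0..pi/2} (\<lambda>t. (sin t)\<^sup>2)" "continuous_on {0..pi/2} (\<lambda>t. (cos t)\<^sup>2)"
      by (intro continuous_intros)+
    note int = this(1)[THEN has_integral_eta_integral[OF continuous_on_kern(3) _ w u]]
      this(2,3)[THEN has_integral_eta_integral[OF continuous_on_kern(2) _ w u]]
    show ?thesis unfolding P'_def
      by (rule has_integral_diff[OF has_integral_add[OF has_integral_mult_right[OF int(1)] int(3)] int(2)])
  qed
  have "2 * (u - w) * J_uw \<nu> a w u + J_w \<nu> a w u - J_u \<nu> a w u = 0"
    using has_integral_unique[OF ftc P'_int] by simp
  then show ?thesis by linarith
qed

lemma J_uu_pos: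
  assumes w: "-\<nu> < w" "w < u" and u: "u < a" and small: "4 * (w + \<nu>) < a + \<nu>"
    and J_uw: "0 < J_uw \<nu> a w u"
  shows "0 < J_uu \<nu> a w u"
proof -
  \<comment> \<open>The weight \<open>m\<close> is affine in \<open>\<eta>\<close> and has the sign of \<open>kern''\<close>, so it can be split between the endpoints \<open>w\<close> and \<open>u\<close>.\<close>
  define m where "m e = 4 * (e + \<nu>) - (a + \<nu>)" for e
  have S: "w \<in> {-\<nu><..<a}" "u \<in> {-\<nu><..<a}" using w u by auto
  note eta = eta_bounds[OF w u]
  have "continuous_on {0..pi/2} (\<lambda>t. (sin t)\<^sup>2 * (cos t)\<^sup>2)"
    "continuous_on {0..pi/2} (\<lambda>t. (sin t)\<^sup>2 * (sin t)\<^sup>2)"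
    by (intro continuous_intros)+
  note int = this[THEN has_integral_eta_integral[OF continuous_on_kern(3) _ S]]
  have "0 < m u"
  proof (rule ccontr)
    assume "\<not> 0 < m u"
    then have "kern'' \<nu> a (eta w u t) * ((sin t)\<^sup>2 * (cos t)\<^sup>2) \<le> 0" for t
      using kern''_nonpos[OF eta(1,2), of t] eta(4)[of t] unfolding m_def
      by (simp add: mult_nonpos_nonneg)
    then have "J_uw \<nu> a w u \<le> 0"
      using has_integral_le[OF int(1) has_integral_0] by simp
    then show False using J_uw by simp
  qed
  have "0 \<le> m w * J_uw \<nu> a w u + m u * J_uu \<nu> a w u"
  proof (rule has_integral_nonneg[OF has_integral_add[OF
        has_integral_mult_right[OF int(1)] has_integral_mult_right[OF int(2)]]])
    fix t
    have "m (eta w u t) = m w * (cos t)\<^sup>2 + m u * (sin t)\<^sup>2"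
      unfolding m_def eta_cos_sin using sin_cos_squared_add[of t] by algebra
    then have "m w * (kern'' \<nu> a (eta w u t) * ((sin t)\<^sup>2 * (cos t)\<^sup>2))
        + m u * (kern'' \<nu> a (eta w u t) * ((sin t)\<^sup>2 * (sin t)\<^sup>2))
        = kern'' \<nu> a (eta w u t) * m (eta w u t) * (sin t)\<^sup>2"
      by (simp add: algebra_simps)
    also have "\<dots> \<ge> 0"
      using kern''_mult_nonneg[OF eta(1,2), of t] unfolding m_def by simp
    finally show "0 \<le> m w * (kern'' \<nu> a (eta w u t) * ((sin t)\<^sup>2 * (cos t)\<^sup>2))
        + m u * (kern'' \<nu> a (eta w u t) * ((sin t)\<^sup>2 * (sin t)\<^sup>2))" .
  qed
  moreover have "m w * J_uw \<nu> a w u < 0"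
    using J_uw small unfolding m_def by (simp add: mult_neg_pos)
  ultimately have "0 < m u * J_uu \<nu> a w u" by linarith
  then show ?thesis using \<open>0 < m u\<close> by (simp add: zero_less_mult_iff)
qed

section \<open>The sign of \<open>\<lambda>\<^sub>2 - \<lambda>\<^sub>3\<close> and of \<open>\<lambda>\<^sub>2\<close>\<close>

context
  fixes \<nu> a b u :: real
  assumes b: "-\<nu> < b" and u: "b < u" "u < a"
begin

lemma J_parts_pos: "0 < J \<nu> a b u" "0 < J_u \<nu> a b u" "0 < J_w \<nu> a b u"
  using b u by (auto intro: J_pos J_u_pos J_w_pos)

lemma has_real_derivative_lam2:
  "((\<lambda>u. lam2 \<nu> a u b) has_real_derivative
      J \<nu> a b u * J_uu \<nu> a b u / (J_u \<nu> a b u)\<^sup>2) (at u)"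
proof -
  have S: "b \<in> {-\<nu><..<a}" "u \<in> {-\<nu><..<a}" using b u by auto
  have "((\<lambda>u. a + u + b + 2 * \<nu> - J \<nu> a b u / J_u \<nu> a b u) has_real_derivative
      1 - (J_u \<nu> a b u * J_u \<nu> a b u - J \<nu> a b u * J_uu \<nu> a b u) / (J_u \<nu> a b u * J_u \<nu> a b u)) (at u)"
    using J_parts_pos
    by (intro DERIV_diff DERIV_divide has_field_derivative_J_right[OF S]
        has_field_derivative_J_u_right[OF S]) (auto intro!: derivative_eq_intros)
  moreover have "1 - (J_u \<nu> a b u * J_u \<nu> a b u - J \<nu> a b u * J_uu \<nu> a b u) / (J_u \<nu> a b u * J_u \<nu> a b u)
      = J \<nu> a b u * J_uu \<nu> a b u / (J_u \<nu> a b u)\<^sup>2"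
    using J_parts_pos by (simp add: field_simps power2_eq_square)
  ultimately have "((\<lambda>u. a + u + b + 2 * \<nu> - J \<nu> a b u / J_u \<nu> a b u) has_real_derivative
      J \<nu> a b u * J_uu \<nu> a b u / (J_u \<nu> a b u)\<^sup>2) (at u)"
    by simp
  then show ?thesis
  proof (rule has_field_derivative_transform_within_open[where S="{b<..<a}"])
    show "a + x + b + 2 * \<nu> - J \<nu> a b x / J_u \<nu> a b x = lam2 \<nu> a x b" if "x \<in> {b<..<a}" for x
      using that lam2_eq_J[OF b] by simp
  qed (use u in auto)
qed

lemma lam3_less_lam2_iff: "lam3 \<nu> a u b < lam2 \<nu> a u b \<longleftrightarrow> 0 < J_uw \<nu> a b u"
proof -
  have "lam3 \<nu> a u b < lam2 \<nu> a u b \<longleftrightarrow> J \<nu> a b u / J_u \<nu> a b u < J \<nu> a b u / J_w \<nu> a b u"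
    using lam2_eq_J[OF b u] lam3_eq_J[OF b u] by simp
  also have "\<dots> \<longleftrightarrow> J_w \<nu> a b u < J_u \<nu> a b u"
    using J_parts_pos by (simp add: divide_strict_left_mono_neg frac_less2 field_simps)
  also have "\<dots> \<longleftrightarrow> 0 < 2 * (u - b) * J_uw \<nu> a b u"
    using b u by (subst J_u_minus_J_w[symmetric]) auto
  also have "\<dots> \<longleftrightarrow> 0 < J_uw \<nu> a b u"
    using u by (simp add: zero_less_mult_iff)
  finally show ?thesis .
qed

end

context
  fixes \<nu> a w u :: real
  assumes w: "-\<nu> < w" "w < u" and u: "u < a"
begin

lemma J_w_le_J: "J_w \<nu> a w u \<le> (a + \<nu>) / (2 * (w + \<nu>) * (u - w)) * J \<nu> a w u"
proof -
  define K where "K = (a + \<nu>) / (2 * (w + \<nu>) * (u - w))"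
  have S: "w \<in> {-\<nu><..<a}" "u \<in> {-\<nu><..<a}" using w u by auto
  have pointwise: "kern' \<nu> a (eta w u t) * (cos t)\<^sup>2 \<le> K * (kern \<nu> a (eta w u t) * 1)" for t
  proof -
    define e where "e = eta w u t"
    have e: "-\<nu> < e" "e < a" "w \<le> e" using eta_bounds[OF w u] unfolding e_def by auto
    have "(cos t)\<^sup>2 * ((w + \<nu>) * (u - w)) = (w + \<nu>) * (u - e)"
      unfolding e_def eta_diff_right by simp
    also have "\<dots> \<le> (e + \<nu>) * (a - e)"
      using e w u eta_bounds(4)[OF w u, of t] unfolding e_def by (intro mult_mono) auto
    finally have "(cos t)\<^sup>2 * (2 * ((w + \<nu>) * (u - w))) \<le> 2 * ((e + \<nu>) * (a - e))"
      by (subst mult.left_commute) simp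
    then have "(a + \<nu>) * (cos t)\<^sup>2 / (2 * (e + \<nu>) * (a - e)) \<le> K"
      unfolding K_def mult.assoc[of 2] using e w u by (intro divide_le_divide_if_cross_le) auto
    then have "(a + \<nu>) * (cos t)\<^sup>2 / (2 * (e + \<nu>) * (a - e)) * kern \<nu> a e \<le> K * kern \<nu> a e"
      using kern_pos[OF e(1,2)] by (intro mult_right_mono) auto
    then show ?thesis unfolding kern'_eq_kern[OF e(1,2)] e_def[symmetric]
      by (simp add: ac_simps)
  qed
  have "J_w \<nu> a w u \<le> K * J \<nu> a w u"
    using has_integral_le[OF has_integral_eta_integral[OF continuous_on_kern(2) _ S]
        has_integral_mult_right[OF has_integral_eta_integral[OF continuous_on_kern(1) _ S]] pointwise]
    by (simp add: continuous_intros)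
  then show ?thesis unfolding K_def .
qed

lemma J_le: "J \<nu> a w u \<le> pi * sqrt (a + \<nu>) / sqrt (a - u)"
proof -
  have S: "w \<in> {-\<nu><..<a}" "u \<in> {-\<nu><..<a}" using w u by auto
  have "kern \<nu> a (eta w u t) * 1 \<le> 2 * sqrt (a + \<nu>) / sqrt (a - u)" for t
    unfolding kern_def mult_1_right using eta_bounds[OF w u, of t] u by (intro frac_le) auto
  then have "J \<nu> a w u \<le> integral {0..pi/2} (\<lambda>t. 2 * sqrt (a + \<nu>) / sqrt (a - u))"
    unfolding eta_integral_def
    by (intro integral_le integrable_continuous_interval continuous_on_eta_integrand[OF continuous_on_kern(1) _ S]) auto
  then show ?thesis by simp
qed

lemma J_u_ge:
  assumes close: "2 * (a - u) \<le> u - w"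
  shows "sqrt (a + \<nu>) / (4 * sqrt 2 * (a - u) * sqrt (u - w)) \<le> J_u \<nu> a w u"
proof -
  \<comment> \<open>For \<open>t \<ge> \<pi>/2 - \<delta>\<close> the point \<open>\<eta>\<close> lies within \<open>2 (a - u)\<close> of \<open>a\<close> and \<open>sin\<^sup>2 t \<ge> 1/2\<close>.\<close>
  define \<epsilon> where "\<epsilon> = a - u"
  define \<delta> where "\<delta> = sqrt (\<epsilon> / (u - w))"
  define m where "m = (a + \<nu>) / (sqrt (a + \<nu>) * (2 * \<epsilon> * sqrt (2 * \<epsilon>)))"
  have S: "w \<in> {-\<nu><..<a}" "u \<in> {-\<nu><..<a}" using w u by auto
  have \<epsilon>: "0 < \<epsilon>" "\<epsilon> / (u - w) \<le> 1 / 2" using close w u unfolding \<epsilon>_def by auto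
  have \<delta>: "0 \<le> \<delta>" "\<delta> \<le> 1" "\<delta>\<^sup>2 = \<epsilon> / (u - w)"
    using \<epsilon> w unfolding \<delta>_def by (auto simp: real_sqrt_le_1_iff)
  have "m * (1/2) * (pi/2 - (pi/2 - \<delta>)) \<le> J_u \<nu> a w u"
    unfolding eta_integral_def
  proof (rule integral_ge_on_subinterval)
    show "continuous_on {0..pi/2} (\<lambda>t. kern' \<nu> a (eta w u t) * (sin t)\<^sup>2)"
      by (intro continuous_on_eta_integrand[OF continuous_on_kern(2) _ S] continuous_intros)
    show "0 \<le> kern' \<nu> a (eta w u t) * (sin t)\<^sup>2" for t
      using kern'_pos[of \<nu> "eta w u t" a] eta_bounds[OF w u, of t] by simp
    show "0 \<le> pi/2 - \<delta>" using \<delta> pi_gt3 by simp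
  next
    fix t assume t: "t \<in> {pi/2 - \<delta>..pi/2}"
    have "cos t = sin (pi/2 - t)" by (simp add: cos_sin_eq)
    also have "\<dots> \<le> \<delta>" using t sin_x_le_x[of "pi/2 - t"] by auto
    finally have "(cos t)\<^sup>2 \<le> \<epsilon> / (u - w)"
      unfolding \<delta>(3)[symmetric] using t \<delta> pi_gt3 by (intro power_mono cos_ge_zero) auto
    then have cos2: "(u - w) * (cos t)\<^sup>2 \<le> \<epsilon>" "(cos t)\<^sup>2 \<le> 1/2"
      using \<epsilon> w by (simp add: field_simps, linarith)
    define e where "e = eta w u t"
    have e: "-\<nu> < e" "e < a" "\<epsilon> \<le> a - e" "a - e \<le> 2 * \<epsilon>"
      using eta_bounds[OF w u, of t] cos2 eta_diff_right[of u w t] unfolding e_def \<epsilon>_def by auto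
    have "m \<le> kern' \<nu> a e"
      unfolding m_def kern'_def using e \<epsilon>
      by (intro divide_left_mono mult_mono) (auto intro!: mult_pos_pos)
    moreover have "1/2 \<le> (sin t)\<^sup>2" using cos2 sin_cos_squared_add[of t] by linarith
    moreover have "0 \<le> m" unfolding m_def using e \<epsilon> by auto
    ultimately show "m * (1/2) \<le> kern' \<nu> a (eta w u t) * (sin t)\<^sup>2"
      unfolding e_def by (intro mult_mono) auto
  qed (use \<delta> in auto)
  moreover have "m * (1/2) * (pi/2 - (pi/2 - \<delta>))
      = sqrt (a + \<nu>) / (4 * sqrt 2 * (a - u) * sqrt (u - w))"
  proof -
    obtain s r l where s: "s = sqrt (a + \<nu>)" and r: "r = sqrt \<epsilon>" and l: "l = sqrt (u - w)"
      by simp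
    have "0 < s" "0 < r" "0 < l" "a + \<nu> = s * s" "\<epsilon> = r * r" "0 < sqrt (2::real)"
      using s r l \<epsilon> w u by auto
    moreover have "\<delta> = r / l" "sqrt (2 * \<epsilon>) = sqrt 2 * r"
      unfolding \<delta>_def r l by (simp_all add: real_sqrt_divide real_sqrt_mult)
    ultimately show ?thesis unfolding m_def \<epsilon>_def[symmetric] s[symmetric] l[symmetric]
      by (simp add: field_simps)
  qed
  ultimately show ?thesis by linarith
qed

lemma J_div_J_u_le:
  assumes "2 * (a - u) \<le> u - w"
  shows "J \<nu> a w u / J_u \<nu> a w u \<le> 4 * sqrt 2 * pi * sqrt (a - u) * sqrt (u - w)"
proof -
  have S: "w \<in> {-\<nu><..<a}" "u \<in> {-\<nu><..<a}" using w u by auto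
  obtain s r l where s: "s = sqrt (a + \<nu>)" and r: "r = sqrt (a - u)" and l: "l = sqrt (u - w)"
    by simp
  have pos: "0 < s" "0 < r" "0 < l" "0 < sqrt (2::real)" using s r l w u by auto
  have "J \<nu> a w u / J_u \<nu> a w u \<le> (pi * s / r) / (s / (4 * sqrt 2 * (r * r) * l))"
    using J_le J_u_ge[OF assms] J_pos[OF S] pos u unfolding s r l by (intro frac_le) auto
  also have "\<dots> = 4 * sqrt 2 * pi * r * l"
    using pos by (simp add: field_simps)
  finally show ?thesis unfolding r l .
qed

end

context
  fixes \<nu> a b :: real
  assumes b: "-\<nu> < b" "b < a"
begin

lemma lam2_minus_lam3:
  "u \<in> {b<..<a} \<Longrightarrow> lam2 \<nu> a u b - lam3 \<nu> a u b = J \<nu> a b u / J_w \<nu> a b u - J \<nu> a b u / J_u \<nu> a b u"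
  using lam2_eq_J[of \<nu> b u a] lam3_eq_J[of \<nu> b u a] b by simp

lemma continuous_on_lam2_minus_lam3:
  "continuous_on {b<..<a} (\<lambda>u. lam2 \<nu> a u b - lam3 \<nu> a u b)"
proof -
  have "continuous_on {b<..<a} (\<lambda>u. J \<nu> a b u / J_w \<nu> a b u - J \<nu> a b u / J_u \<nu> a b u)"
  proof (intro continuous_at_imp_continuous_on ballI)
    fix u assume u: "u \<in> {b<..<a}"
    then have S: "b \<in> {-\<nu><..<a}" "u \<in> {-\<nu><..<a}" using b by auto
    have "isCont (J \<nu> a b) u" "isCont (J_u \<nu> a b) u" "isCont (J_w \<nu> a b) u"
      using has_field_derivative_J_right[OF S] has_field_derivative_J_u_right[OF S]
        has_field_derivative_J_w_right[OF S] by (auto dest: DERIV_isCont)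
    then show "isCont (\<lambda>u. J \<nu> a b u / J_w \<nu> a b u - J \<nu> a b u / J_u \<nu> a b u) u"
      using J_parts_pos[of \<nu> b u a] b u by (auto intro!: continuous_intros)
  qed
  then show ?thesis by (rule continuous_on_eq) (use lam2_minus_lam3 in auto)
qed

lemma tendsto_J_div_J_u: "((\<lambda>u. J \<nu> a b u / J_u \<nu> a b u) \<longlongrightarrow> 0) (at_left a)"
proof (rule tendsto_sandwich)
  have near: "eventually (\<lambda>u. u \<in> {(2 * a + b) / 3<..<a}) (at_left a)"
    using b by (intro eventually_at_left_real) simp
  show "eventually (\<lambda>u. 0 \<le> J \<nu> a b u / J_u \<nu> a b u) (at_left a)"
    using near by eventually_elim (use J_parts_pos[of \<nu> b _ a] b in \<open>auto intro: less_imp_le\<close>)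
  show "eventually (\<lambda>u. J \<nu> a b u / J_u \<nu> a b u \<le> 4 * sqrt 2 * pi * sqrt (a - u) * sqrt (u - b))
      (at_left a)"
    using near by eventually_elim (use J_div_J_u_le[of \<nu> b] b in auto)
  show "((\<lambda>u. 4 * sqrt 2 * pi * sqrt (a - u) * sqrt (u - b)) \<longlongrightarrow> 0) (at_left a)"
    by (auto intro!: tendsto_eq_intros)
qed simp

lemma tendsto_lam2: "((\<lambda>u. lam2 \<nu> a u b) \<longlongrightarrow> lam2 \<nu> a a b) (at_left a)"
proof -
  have "((\<lambda>u. a + u + b + 2 * \<nu> - J \<nu> a b u / J_u \<nu> a b u) \<longlongrightarrow> a + a + b + 2 * \<nu> - 0) (at_left a)"
    by (intro tendsto_intros tendsto_J_div_J_u)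
  moreover have "eventually (\<lambda>u. a + u + b + 2 * \<nu> - J \<nu> a b u / J_u \<nu> a b u = lam2 \<nu> a u b) (at_left a)"
    using eventually_at_left_real[OF b(2)] by eventually_elim (use lam2_eq_J b in auto)
  ultimately show ?thesis unfolding lam2_def by (auto dest: tendsto_cong[THEN iffD1, rotated])
qed

lemma eventually_lam3_less_lam2: "eventually (\<lambda>u. lam3 \<nu> a u b < lam2 \<nu> a u b) (at_left a)"
proof -
  define L where "L = (b + \<nu>) * (a - b) / (a + \<nu>)"
  have L: "0 < L" unfolding L_def using b by simp
  have "((\<lambda>u. 2 * (b + \<nu>) * (u - b) / (a + \<nu>)) \<longlongrightarrow> 2 * L) (at_left a)"
    unfolding L_def using b by (auto intro!: tendsto_eq_intros)
  then have "eventually (\<lambda>u. L < 2 * (b + \<nu>) * (u - b) / (a + \<nu>)) (at_left a)"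
    using L by (intro order_tendstoD) auto
  moreover have "eventually (\<lambda>u. J \<nu> a b u / J_u \<nu> a b u < L) (at_left a)"
    using tendsto_J_div_J_u L by (intro order_tendstoD)
  moreover have "eventually (\<lambda>u. u \<in> {b<..<a}) (at_left a)"
    using b by (intro eventually_at_left_real)
  ultimately show ?thesis
  proof eventually_elim
    case (elim u)
    then have u: "b < u" "u < a" by auto
    have pos: "0 < J \<nu> a b u" "0 < J_w \<nu> a b u" using J_parts_pos[of \<nu> b u a] b u by auto
    define K where "K = (a + \<nu>) / (2 * (b + \<nu>) * (u - b))"
    have K: "0 < K" unfolding K_def using b u by simp
    have "J \<nu> a b u / (K * J \<nu> a b u) \<le> J \<nu> a b u / J_w \<nu> a b u"
      using J_w_le_J[of \<nu> b u a] b u pos K unfolding K_def[symmetric]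
      by (intro divide_left_mono) auto
    then have "2 * (b + \<nu>) * (u - b) / (a + \<nu>) \<le> J \<nu> a b u / J_w \<nu> a b u"
      using pos unfolding K_def by simp
    then show ?case using elim lam2_minus_lam3[of u] by simp
  qed
qed

end

lemma lam2_deriv_pos:
  assumes b: "-\<nu> < b" and u: "b < u" "u < a" and small: "4 * (b + \<nu>) < a + \<nu>"
    and "lam3 \<nu> a u b < lam2 \<nu> a u b"
  shows "\<exists>d. ((\<lambda>u. lam2 \<nu> a u b) has_real_derivative d) (at u) \<and> 0 < d"
proof -
  have "0 < J_uu \<nu> a b u"
    using J_uu_pos[OF b u(1) u(2) small] assms(5) lam3_less_lam2_iff[OF b u] by simp
  then have "0 < J \<nu> a b u * J_uu \<nu> a b u / (J_u \<nu> a b u)\<^sup>2"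
    using J_parts_pos[OF b u] by simp
  then show ?thesis using has_real_derivative_lam2[OF b u] by blast
qed

lemma continuous_on_lam2:
  assumes b: "-\<nu> < b" and x: "b < x" "x < a"
  shows "continuous_on {x..a} (\<lambda>u. lam2 \<nu> a u b)"
proof (rule continuous_on_IccI)
  have cont: "isCont (\<lambda>u. lam2 \<nu> a u b) u" if "b < u" "u < a" for u
    using has_real_derivative_lam2[OF b that] by (rule DERIV_isCont)
  then show "((\<lambda>u. lam2 \<nu> a u b) \<longlongrightarrow> lam2 \<nu> a x b) (at_right x)"
    using x by (auto simp: isCont_def intro: tendsto_mono[OF at_le])
  show "((\<lambda>u. lam2 \<nu> a u b) \<longlongrightarrow> lam2 \<nu> a a b) (at_left a)"
    using b x by (intro tendsto_lam2) auto
  show "((\<lambda>u. lam2 \<nu> a u b) \<longlongrightarrow> lam2 \<nu> a u b) (at u)" if "x < u" "u < a" for u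
    using cont[of u] that x by (simp add: isCont_def)
qed (use x in simp)

theorem lemma4p6:
  fixes \<nu> a b ustar :: real
  assumes "0 < b + \<nu>" and "b + \<nu> < (a + \<nu>) / 4"
    and "b < ustar" and "ustar < a"
    and "lam2 \<nu> a ustar b = lam3 \<nu> a ustar b"
    and "\<And>u. b < u \<Longrightarrow> u < a \<Longrightarrow> lam2 \<nu> a u b = lam3 \<nu> a u b \<Longrightarrow> u = ustar"
  shows "strict_mono_on {ustar..a} (\<lambda>u. lam2 \<nu> a u b)
    \<and> bij_betw (\<lambda>u. lam2 \<nu> a u b) {ustar..a}
        {lam2 \<nu> a ustar b .. 2 * a + b + 2 * \<nu>}"
proof -
  have b: "-\<nu> < b" "b < a" and small: "4 * (b + \<nu>) < a + \<nu>" using assms(1-4) by auto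
  have lam3_less: "lam3 \<nu> a u b < lam2 \<nu> a u b" if "u \<in> {ustar<..<a}" for u
  proof -
    have "0 < lam2 \<nu> a u b - lam3 \<nu> a u b"
    proof (rule pos_if_no_zeros_and_eventually_pos[OF _ _ _ that])
      show "continuous_on {ustar<..<a} (\<lambda>u. lam2 \<nu> a u b - lam3 \<nu> a u b)"
        using assms(3) by (intro continuous_on_subset[OF continuous_on_lam2_minus_lam3[OF b]]) auto
      show "lam2 \<nu> a z b - lam3 \<nu> a z b \<noteq> 0" if "z \<in> {ustar<..<a}" for z
        using assms(3) assms(6)[of z] that by auto
      show "eventually (\<lambda>z. 0 < lam2 \<nu> a z b - lam3 \<nu> a z b) (at_left a)"
        using eventually_lam3_less_lam2[OF b] by simp
    qed
    then show ?thesis by simp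
  qed
  have cont: "continuous_on {ustar..a} (\<lambda>u. lam2 \<nu> a u b)"
    using continuous_on_lam2 b assms(3,4) by blast
  have mono: "strict_mono_on {ustar..a} (\<lambda>u. lam2 \<nu> a u b)"
    using lam2_deriv_pos[OF b(1) _ _ small] lam3_less assms(3)
    by (intro strict_mono_on_if_deriv_pos[OF cont]) auto
  moreover have "lam2 \<nu> a a b = 2 * a + b + 2 * \<nu>" by (simp add: lam2_def)
  ultimately show ?thesis
    using bij_betw_if_strict_mono_continuous[OF mono cont] assms(4) by simp
qed

end
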